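(* Let $n>1$ agents $\mathcal N=\{1,\dots,n\}$ communicate over a time-varying directed graph $\mathbb N(t)=(\mathcal N,\mathcal E(t))$, $t=1,2,\dots$, where $(i,j)\in\mathcal E(t)$ means agent $i$ can send information to agent $j$ at time $t$. Let $o_i(t)$ be the out-degree of $i$ in $\mathbb N(t)$ and $\mathcal N_i^{\mathrm{in}}(t)=\{j:(j,i)\in\mathcal E(t)\}$ its set of in-neighbors. For each agent $i$, let $x_i(1),x_i(2),\dots$ be i.i.d. samples of a random variable $X_i$ with $|X_i|\le K$ almost surely; put $\bar x_i=E[X_i]$, $\bar x=\frac1n\sum_i\bar x_i$, and $z_i(t)=\frac1t\sum_{\tau=1}^t x_i(\tau)$. Each agent initializes $y_i(1)=x_i(1)$, $v_i(1)=1$, and for $t=1,2,\dots$ updates $$\mu_i(t+1)=\frac{y_i(t)}{1+o_i(t)}+\sum_{j\in\mathcal N_i^{\mathrm{in}}(t)}\frac{y_j(t)}{1+o_j(t)},\qquad v_i(t+1)=\frac{v_i(t)}{1+o_i(t)}+\sum_{j\in\mathcal N_i^{\mathrm{in}}(t)}\frac{v_j(t)}{1+o_j(t)},$$ $$y_i(t+1)=\mu_i(t+1)+z_i(t+1)-z_i(t).$$ Assume: (i) for every $t$ there is a symmetric stochastic matrix $W(t)$ with positive diagonal entries and $w_{ij}(t)=0$ whenever $i\neq j$ and $(i,j)\notin\mathcal E(t)$; (ii) $\{\mathbb N(t)\}$ is repeatedly jointly strongly connected: there is a positive integer $r$ such that for each $k\ge0$ the union of $\mathbb N(rk+1),\dots,\mathbb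 N(r(k+1))$ is strongly connected. Then $\lim_{t\to\infty}\mu_i(t)/v_i(t)=\bar x$ for all $i$ almost surely. Moreover, the sequences $\{\mu_i(t)/v_i(t)\}$ reach consensus at rate $O(1/t)$ with high probability: there is a constant $C$ such that, with probability tending to $1$ as $t\to\infty$, $\max_i\mu_i(t)/v_i(t)-\min_j\mu_j(t)/v_j(t)\le C/t$.
   Context: The union of directed graphs on the same vertex set has as edge set the union of their edge sets; a directed graph is strongly connected if there is a directed path between each ordered pair of distinct vertices. "With high probability" means with probability tending to $1$ as $t\to\infty$. Each agent sends $y_i(t)/(1+o_i(t))$ and $v_i(t)/(1+o_i(t))$ to its out-neighbors. *)

theory Defs
  imports "HOL-Probability.Probability"
begin

text \<open>Agents are 0,...,n-1. A time-varying digraph is E :: nat => (nat * nat) set,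
  (i,j) in E t meaning i can send to j at time t. Self-loops are ignored.\<close>

definition outdeg :: "nat \<Rightarrow> (nat \<Rightarrow> (nat \<times> nat) set) \<Rightarrow> nat \<Rightarrow> nat \<Rightarrow> nat" where
  "outdeg n E t i = card {j. j < n \<and> j \<noteq> i \<and> (i, j) \<in> E t}"

definition in_nbrs :: "nat \<Rightarrow> (nat \<Rightarrow> (nat \<times> nat) set) \<Rightarrow> nat \<Rightarrow> nat \<Rightarrow> nat set" where
  "in_nbrs n E t i = {j. j < n \<and> j \<noteq> i \<and> (j, i) \<in> E t}"

definition push :: "nat \<Rightarrow> (nat \<Rightarrow> (nat \<times> nat) set) \<Rightarrow> nat \<Rightarrow> (nat \<Rightarrow> real) \<Rightarrow> nat \<Rightarrow> real" where
  "push n E t f i = f i / (1 + real (outdeg n E t i))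
     + (\<Sum>j\<in>in_nbrs n E t i. f j / (1 + real (outdeg n E t j)))"

definition zavg :: "(nat \<Rightarrow> nat \<Rightarrow> real) \<Rightarrow> nat \<Rightarrow> nat \<Rightarrow> real" where
  "zavg xs i t = (\<Sum>\<tau>=1..t. xs i \<tau>) / real t"

text \<open>yv ... t = (y(t), v(t)) for t >= 1 (value at t = 0 unused).\<close>
fun yv :: "nat \<Rightarrow> (nat \<Rightarrow> (nat \<times> nat) set) \<Rightarrow> (nat \<Rightarrow> nat \<Rightarrow> real) \<Rightarrow> nat
           \<Rightarrow> (nat \<Rightarrow> real) \<times> (nat \<Rightarrow> real)" where
  "yv n E xs 0 = (\<lambda>i. 0, \<lambda>i. 0)"
| "yv n E xs (Suc 0) = (\<lambda>i. xs i 1, \<lambda>i. 1)"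
| "yv n E xs (Suc (Suc s)) =
     (let y = fst (yv n E xs (Suc s)); v = snd (yv n E xs (Suc s)); t = Suc s in
      (\<lambda>i. push n E t y i + zavg xs i (Suc t) - zavg xs i t, \<lambda>i. push n E t v i))"

text \<open>mu_i(t) for t >= 2: mu_i(t+1) = push of y(t) at time t.\<close>
definition mu :: "nat \<Rightarrow> (nat \<Rightarrow> (nat \<times> nat) set) \<Rightarrow> (nat \<Rightarrow> nat \<Rightarrow> real) \<Rightarrow> nat \<Rightarrow> nat \<Rightarrow> real" where
  "mu n E xs t i = push n E (t - 1) (fst (yv n E xs (t - 1))) i"

definition vw :: "nat \<Rightarrow> (nat \<Rightarrow> (nat \<times> nat) set) \<Rightarrow> (nat \<Rightarrow> nat \<Rightarrow> real) \<Rightarrow> nat \<Rightarrow> nat \<Rightarrow> real" where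
  "vw n E xs t i = snd (yv n E xs t) i"

definition compatible_weights :: "nat \<Rightarrow> (nat \<times> nat) set \<Rightarrow> bool" where
  "compatible_weights n Et \<longleftrightarrow> (\<exists>W :: nat \<Rightarrow> nat \<Rightarrow> real.
      (\<forall>i<n. \<forall>j<n. W i j = W j i) \<and>
      (\<forall>i<n. \<forall>j<n. 0 \<le> W i j) \<and>
      (\<forall>i<n. (\<Sum>j<n. W i j) = 1) \<and>
      (\<forall>i<n. 0 < W i i) \<and>
      (\<forall>i<n. \<forall>j<n. i \<noteq> j \<and> (i, j) \<notin> Et \<longrightarrow> W i j = 0))"

definition strongly_connected :: "nat \<Rightarrow> (nat \<times> nat) set \<Rightarrow> bool" where
  "strongly_connected n Ed \<longleftrightarrow> (\<forall>i<n. \<forall>j<n. i \<noteq> j \<longrightarrow> (i, j) \<in> (Ed \<inter> ({..<n} \<times> {..<n}))\<^sup>+)"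

definition repeatedly_jointly_strongly_connected :: "nat \<Rightarrow> (nat \<Rightarrow> (nat \<times> nat) set) \<Rightarrow> bool" where
  "repeatedly_jointly_strongly_connected n E \<longleftrightarrow> (\<exists>r::nat. r > 0 \<and>
      (\<forall>k::nat. strongly_connected n (\<Union>t\<in>{r*k+1..r*(k+1)}. E t)))"

end

theory Submission
  imports Defs
begin

(* Let A(t) be the column-stochastic matrix by which push-sum splits every value among the
   agent and its out-neighbours.  Then v(t+1) = A(t) v(t) and mu(t+1) = A(t) y(t), so the sums
   of v and y are conserved, and the ratios w = y/v evolve by the row-stochastic matrix
   P(t) = diag(v(t+1))^-1 A(t) diag(v(t)) up to the increments of the running averages z,
   which are O(1/t).  Joint strong connectivity keeps v bounded below and every entry of P
   along an edge at least a fixed eta > 0, so over r n steps the spread max w - min w shrinks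
   by a fixed factor 1 - gamma up to an O(1/s) error, and D(s + r n) <= (1 - gamma) D(s) + a/s
   forces D(t) = O(1/t).  Since y is conserved, the v-weighted mean of mu/v is the mean of the
   running averages, which converges to the mean of the expectations by the strong law
   (Hoeffding and Borel-Cantelli).  The O(1/t) bound holds on every sample path with bounded
   samples, hence with probability one. *)

section \<open>A strong law for bounded i.i.d. samples\<close>

context prob_space
begin

context
  fixes X :: "nat \<Rightarrow> 'a \<Rightarrow> real" and K :: real
  assumes indep: "indep_vars (\<lambda>_. borel) X {1..}"
    and ident: "\<And>\<tau>. 1 \<le> \<tau> \<Longrightarrow> distr M borel (X \<tau>) = distr M borel (X 1)"
    and bounded: "AE \<omega> in M. \<bar>X 1 \<omega>\<bar> \<le> K"
begin

lemma running_average_tail_bound: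
  assumes "1 \<le> t" "0 \<le> e"
  shows "prob {\<omega> \<in> space M. e \<le> \<bar>(\<Sum>\<tau>=1..t. X \<tau> \<omega>) / real t - expectation (X 1)\<bar>}
           \<le> 2 * exp (- 2 * real t * e\<^sup>2 / (2 * \<bar>K\<bar> + 2)\<^sup>2)"
proof -
  (* Hoeffding needs a nondegenerate interval, also when K = 0. *)
  interpret iid_interval_bounded_random_variables M "{1..t}" X "X 1" "- \<bar>K\<bar> - 1" "\<bar>K\<bar> + 1"
  proof (intro iid_interval_bounded_random_variables.intro
      iid_interval_bounded_random_variables_axioms.intro)
    show "prob_space M" by (rule prob_space_axioms)
    show "finite {1..t}" by simp
    show "indep_vars (\<lambda>_. borel) X {1..t}" by (rule indep_vars_subset[OF indep]) auto
    show "distr M borel (X \<tau>) = distr M borel (X 1)" if "\<tau> \<in> {1..t}" for \<tau>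
      by (rule ident) (use that in simp)
    show "random_variable borel (X 1)" using indep by (auto simp: indep_vars_def)
    show "AE \<omega> in M. X 1 \<omega> \<in> {- \<bar>K\<bar> - 1..\<bar>K\<bar> + 1}"
      using bounded by eventually_elim auto
  qed
  interpret Hoeffding_ineq_iid M "{1..t}" X "X 1" "- \<bar>K\<bar> - 1" "\<bar>K\<bar> + 1" "expectation (X 1)"
    by unfold_locales simp
  have "- \<bar>K\<bar> - 1 < \<bar>K\<bar> + 1" "{1..t} \<noteq> {}" using \<open>1 \<le> t\<close> by auto
  from Hoeffding_ineq_abs_ge'[OF \<open>0 \<le> e\<close> this] show ?thesis
    by (simp add: algebra_simps)
qed

lemma AE_eventually_running_average_near:
  assumes "0 < e"
  shows "AE \<omega> in M. eventually (\<lambda>t.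
           \<bar>(\<Sum>\<tau>=1..t. X \<tau> \<omega>) / real t - expectation (X 1)\<bar> < e) sequentially"
proof -
  define A where
    "A t = {\<omega> \<in> space M. e \<le> \<bar>(\<Sum>\<tau>=1..t. X \<tau> \<omega>) / real t - expectation (X 1)\<bar>}" for t
  define q where "q = exp (- 2 * e\<^sup>2 / (2 * \<bar>K\<bar> + 2)\<^sup>2)"
  have q: "0 < q" "q < 1" using \<open>0 < e\<close> unfolding q_def by (auto simp: add_pos_nonneg)
  have A_sets: "A t \<in> sets M" for t
  proof -
    have "(\<lambda>\<omega>. \<Sum>\<tau>=1..t. X \<tau> \<omega>) \<in> borel_measurable M"
      using indep by (intro borel_measurable_sum) (auto simp: indep_vars_def)
    then show ?thesis unfolding A_def by measurable
  qed
  have A_bound: "measure M (A t) \<le> 2 * q ^ t" for t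
  proof (cases "t = 0")
    case False
    have "exp (- 2 * real t * e\<^sup>2 / (2 * \<bar>K\<bar> + 2)\<^sup>2) = q ^ t"
      unfolding q_def by (simp add: exp_of_nat_mult[symmetric] algebra_simps)
    then show ?thesis
      using running_average_tail_bound[of t e] False \<open>0 < e\<close> unfolding A_def by simp
  qed (simp add: order_trans[OF prob_le_1])
  have "summable (\<lambda>t. measure M (A t))"
  proof (rule summable_comparison_test)
    show "\<exists>N. \<forall>t\<ge>N. norm (measure M (A t)) \<le> 2 * q ^ t" using A_bound by auto
    show "summable (\<lambda>t. 2 * q ^ t)" using q by (intro summable_mult summable_geometric) auto
  qed
  from borel_cantelli_AE1[OF A_sets _ this]
  have "AE \<omega> in M. eventually (\<lambda>t. \<omega> \<in> space M - A t) sequentially"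
    by (simp add: emeasure_eq_measure)
  then show ?thesis
  proof eventually_elim
    case (elim \<omega>)
    then show ?case by eventually_elim (auto simp: A_def)
  qed
qed

lemma strong_law_bounded_iid:
  "AE \<omega> in M. ((\<lambda>t. (\<Sum>\<tau>=1..t. X \<tau> \<omega>) / real t) \<longlongrightarrow> expectation (X 1)) sequentially"
proof -
  have "AE \<omega> in M. \<forall>m::nat. eventually (\<lambda>t.
      \<bar>(\<Sum>\<tau>=1..t. X \<tau> \<omega>) / real t - expectation (X 1)\<bar> < 1 / real (Suc m)) sequentially"
    by (subst AE_all_countable) (intro allI AE_eventually_running_average_near, simp)
  then show ?thesis
  proof eventually_elim
    case (elim \<omega>)
    show ?case
    proof (rule tendstoI)
      fix e :: real
      assume "0 < e"
      then obtain m where m: "1 / real (Suc m) < e" by (metis nat_approx_posE)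
      from elim[rule_format, of m]
      show "eventually (\<lambda>t. dist ((\<Sum>\<tau>=1..t. X \<tau> \<omega>) / real t) (expectation (X 1)) < e) sequentially"
        by eventually_elim (use m in \<open>auto simp: dist_real_def\<close>)
    qed
  qed
qed

end

end

section \<open>The push-sum matrix\<close>

lemma yv_Suc:
  "1 \<le> t \<Longrightarrow> yv n E xs (Suc t) =
     (\<lambda>i. push n E t (fst (yv n E xs t)) i + zavg xs i (Suc t) - zavg xs i t,
      \<lambda>i. push n E t (snd (yv n E xs t)) i)"
  by (cases t) (auto simp: Let_def)

definition push_matrix :: "nat \<Rightarrow> (nat \<Rightarrow> (nat \<times> nat) set) \<Rightarrow> nat \<Rightarrow> nat \<Rightarrow> nat \<Rightarrow> real" where
  "push_matrix n E t i j =
     (if j < n \<and> (j = i \<or> j \<in> in_nbrs n E t i) then 1 / (1 + real (outdeg n E t j)) else 0)"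

lemma in_nbrs_subset: "in_nbrs n E t i \<subseteq> {..<n} - {i}"
  unfolding in_nbrs_def by auto

lemma outdeg_less: "i < n \<Longrightarrow> outdeg n E t i < n"
proof -
  assume "i < n"
  have "outdeg n E t i \<le> card ({..<n} - {i})"
    unfolding outdeg_def by (intro card_mono) auto
  then show ?thesis using \<open>i < n\<close> by simp
qed

lemma push_eq_matrix_sum:
  assumes "i < n"
  shows "push n E t f i = (\<Sum>j<n. push_matrix n E t i j * f j)"
proof -
  let ?S = "{j \<in> {..<n}. j = i \<or> j \<in> in_nbrs n E t i}"
  have "(\<Sum>j<n. push_matrix n E t i j * f j)
      = (\<Sum>j<n. if j = i \<or> j \<in> in_nbrs n E t i then f j / (1 + real (outdeg n E t j)) else 0)"
    unfolding push_matrix_def by (intro sum.cong) auto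
  also have "\<dots> = (\<Sum>j\<in>?S. f j / (1 + real (outdeg n E t j)))"
    by (rule sum.inter_filter[symmetric]) simp
  also have "?S = insert i (in_nbrs n E t i)"
    using assms in_nbrs_subset[of n E t i] by auto
  also have "(\<Sum>j\<in>insert i (in_nbrs n E t i). f j / (1 + real (outdeg n E t j))) = push n E t f i"
    unfolding push_def using in_nbrs_subset[of n E t i]
    by (subst sum.insert) (auto intro: finite_subset)
  finally show ?thesis by simp
qed

lemma push_matrix_nonneg: "0 \<le> push_matrix n E t i j"
  unfolding push_matrix_def by auto

lemma push_matrix_column_sum:
  assumes "j < n"
  shows "(\<Sum>i<n. push_matrix n E t i j) = 1"
proof -
  let ?S = "{i \<in> {..<n}. j = i \<or> j \<in> in_nbrs n E t i}"
  have "(\<Sum>i<n. push_matrix n E t i j)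
      = (\<Sum>i<n. if j = i \<or> j \<in> in_nbrs n E t i then 1 / (1 + real (outdeg n E t j)) else 0)"
    unfolding push_matrix_def using assms by (intro sum.cong) auto
  also have "\<dots> = (\<Sum>i\<in>?S. 1 / (1 + real (outdeg n E t j)))"
    by (rule sum.inter_filter[symmetric]) simp
  also have "?S = insert j {i. i < n \<and> i \<noteq> j \<and> (j, i) \<in> E t}"
    using assms unfolding in_nbrs_def by auto
  also have "card (insert j {i. i < n \<and> i \<noteq> j \<and> (j, i) \<in> E t}) = 1 + outdeg n E t j"
    unfolding outdeg_def by (subst card_insert_disjoint) auto
  then have "(\<Sum>i\<in>insert j {i. i < n \<and> i \<noteq> j \<and> (j, i) \<in> E t}. 1 / (1 + real (outdeg n E t j))) = 1"
    by (simp add: add_pos_nonneg)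
  finally show ?thesis .
qed

lemma push_matrix_ge:
  assumes "i < n" "j < n" "j = i \<or> (j, i) \<in> E t"
  shows "1 / real n \<le> push_matrix n E t i j"
proof -
  have "push_matrix n E t i j = 1 / (1 + real (outdeg n E t j))"
    using assms unfolding push_matrix_def in_nbrs_def by auto
  moreover have "1 + real (outdeg n E t j) \<le> real n"
    using outdeg_less[OF assms(2), of E t] by linarith
  ultimately show ?thesis by (simp add: frac_le)
qed

lemma sum_push: "(\<Sum>i<n. push n E t f i) = (\<Sum>j<n. f j)"
proof -
  have "(\<Sum>i<n. push n E t f i) = (\<Sum>i<n. \<Sum>j<n. push_matrix n E t i j * f j)"
    by (simp add: push_eq_matrix_sum)
  also have "\<dots> = (\<Sum>j<n. (\<Sum>i<n. push_matrix n E t i j) * f j)"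
    by (subst sum.swap) (simp add: sum_distrib_right)
  also have "\<dots> = (\<Sum>j<n. f j)"
    by (simp add: push_matrix_column_sum)
  finally show ?thesis .
qed

lemma trancl_leaves_set:
  assumes "(x, y) \<in> S\<^sup>+" "x \<in> R" "y \<notin> R"
  obtains a b where "(a, b) \<in> S" "a \<in> R" "b \<notin> R"
  using assms
proof (induction rule: trancl_induct)
  case (step y z)
  then show ?case by (cases "y \<in> R") auto
qed auto

section \<open>Spreading along jointly strongly connected windows\<close>

locale jointly_spreading_sets =
  fixes n r s :: nat and E :: "nat \<Rightarrow> (nat \<times> nat) set" and R :: "nat \<Rightarrow> nat set"
  assumes r_pos: "0 < r"
    and windows_connected: "\<And>k. strongly_connected n (\<Union>t\<in>{r*k+1..r*(k+1)}. E t)"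
    and R_subset: "\<And>\<tau>. R \<tau> \<subseteq> {..<n}"
    and R_step: "\<And>\<tau>. s \<le> \<tau> \<Longrightarrow> R \<tau> \<subseteq> R (Suc \<tau>)"
    and R_edge: "\<And>\<tau> l i. s \<le> \<tau> \<Longrightarrow> l \<in> R \<tau> \<Longrightarrow> i < n \<Longrightarrow> (l, i) \<in> E \<tau> \<Longrightarrow> i \<in> R (Suc \<tau>)"
begin

lemma finite_R: "finite (R \<tau>)"
  using R_subset finite_subset by blast

lemma R_mono:
  assumes "s \<le> \<tau>" "\<tau> \<le> \<tau>'"
  shows "R \<tau> \<subseteq> R \<tau>'"
  using assms(2)
proof (induction \<tau>' rule: dec_induct)
  case (step m)
  then show ?case using R_step[of m] assms(1) by auto
qed simp

lemma card_R_window_less: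
  assumes "s \<le> r * k + 1" "a \<in> R (r * k + 1)" "b < n" "b \<notin> R (r * k + 1)"
  shows "card (R (r * k + 1)) < card (R (r * (k + 1) + 1))"
proof -
  let ?U = "\<Union>t\<in>{r*k+1..r*(k+1)}. E t"
  have "a < n" "a \<noteq> b" using assms R_subset by auto
  then have "(a, b) \<in> (?U \<inter> ({..<n} \<times> {..<n}))\<^sup>+"
    using windows_connected[of k] \<open>b < n\<close> unfolding strongly_connected_def by auto
  then obtain l i where li: "(l, i) \<in> ?U \<inter> ({..<n} \<times> {..<n})" "l \<in> R (r * k + 1)" "i \<notin> R (r * k + 1)"
    using assms(2,4) by (rule trancl_leaves_set)
  then obtain t where t: "t \<in> {r*k+1..r*(k+1)}" "(l, i) \<in> E t" "i < n" by auto
  have "l \<in> R t" using R_mono[of "r*k+1" t] assms(1) t li by auto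
  then have "i \<in> R (Suc t)" using R_edge[of t l i] t assms(1) by auto
  then have "insert i (R (r * k + 1)) \<subseteq> R (r * (k + 1) + 1)"
    using R_mono[of "Suc t" "r * (k + 1) + 1"] R_mono[of "r*k+1" "r * (k + 1) + 1"] t assms(1) by auto
  then have "card (insert i (R (r * k + 1))) \<le> card (R (r * (k + 1) + 1))"
    using finite_R by (intro card_mono) auto
  then show ?thesis using li finite_R by simp
qed

lemma card_R_windows:
  assumes "s \<le> r * k + 1" "R (r * k + 1) \<noteq> {}"
  shows "min n (m + 1) \<le> card (R (r * (k + m) + 1))"
proof (induction m)
  case 0
  have "1 \<le> card (R (r * k + 1))" using assms(2) finite_R by (simp add: Suc_leI card_gt_0_iff)
  then show ?case by simp
next
  case (Suc m)
  let ?k = "k + m"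
  have start: "s \<le> r * ?k + 1" using assms(1) by (simp add: algebra_simps)
  have grow: "R (r * ?k + 1) \<subseteq> R (r * (?k + 1) + 1)" using R_mono start by simp
  show ?case
  proof (cases "R (r * ?k + 1) = {..<n}")
    case True
    then have "R (r * (?k + 1) + 1) = {..<n}" using grow R_subset by blast
    then show ?thesis by (simp add: algebra_simps)
  next
    case False
    then obtain b where b: "b < n" "b \<notin> R (r * ?k + 1)" using R_subset by blast
    have "R (r * ?k + 1) \<noteq> {}" using Suc b by (auto simp: min_def split: if_splits)
    then obtain a where "a \<in> R (r * ?k + 1)" by blast
    from card_R_window_less[OF start this b] Suc show ?thesis by (simp add: algebra_simps)
  qed
qed

lemma R_full:
  assumes "R s \<noteq> {}"
  shows "R (s + r * n) = {..<n}"
proof -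
  define k where "k = (s + r - 1) div r" \<comment> \<open>the first window starts at \<open>r k + 1 > s\<close>\<close>
  have "r * k \<le> s + r - 1" unfolding k_def by simp
  moreover have "s + r - 1 < r * k + r"
    unfolding k_def using r_pos by (metis add.commute div_mult_mod_eq mod_less_divisor
      mult.commute nat_add_left_cancel_less)
  ultimately have k: "s \<le> r * k" "r * k + 1 \<le> s + r" using r_pos by linarith+
  have "n \<noteq> 0" using assms R_subset by auto
  have "R (r * k + 1) \<noteq> {}" using assms R_mono[of s "r * k + 1"] k by auto
  from card_R_windows[OF _ this, of "n - 1"] k \<open>n \<noteq> 0\<close>
  have "n \<le> card (R (r * (k + (n - 1)) + 1))" by simp
  then have full: "R (r * (k + (n - 1)) + 1) = {..<n}"
    using R_subset by (metis card_lessThan card_mono card_subset_eq finite_lessThan le_antisym)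
  have "r * (k + (n - 1)) + r = r * k + r * n" using \<open>n \<noteq> 0\<close>
    by (cases n) (simp_all add: algebra_simps)
  then have "r * (k + (n - 1)) + 1 \<le> s + r * n" using k by linarith
  moreover have "s \<le> r * (k + (n - 1)) + 1" using k by (simp add: algebra_simps)
  ultimately show ?thesis
    using full R_mono[of "r * (k + (n - 1)) + 1" "s + r * n"] R_subset by auto
qed

end

lemma propagation_lower_bound:
  fixes g :: "nat \<Rightarrow> nat \<Rightarrow> real" and P :: "nat \<Rightarrow> nat \<Rightarrow> nat \<Rightarrow> real"
  assumes r_pos: "0 < r"
    and windows_connected: "\<And>k. strongly_connected n (\<Union>t\<in>{r*k+1..r*(k+1)}. E t)"
    and \<eta>: "0 < \<eta>" "\<eta> \<le> 1"
    and super: "\<And>\<tau> i. s \<le> \<tau> \<Longrightarrow> i < n \<Longrightarrow> (\<Sum>j<n. P \<tau> i j * g \<tau> j) \<le> g (Suc \<tau>) i"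
    and P_nonneg: "\<And>\<tau> i j. s \<le> \<tau> \<Longrightarrow> i < n \<Longrightarrow> j < n \<Longrightarrow> 0 \<le> P \<tau> i j"
    and P_ge: "\<And>\<tau> i l. s \<le> \<tau> \<Longrightarrow> i < n \<Longrightarrow> l < n \<Longrightarrow> l = i \<or> (l, i) \<in> E \<tau> \<Longrightarrow> \<eta> \<le> P \<tau> i l"
    and g_nonneg: "\<And>i. i < n \<Longrightarrow> 0 \<le> g s i"
    and "i < n" "j < n"
  shows "\<eta> ^ (r * n) * g s j \<le> g (s + r * n) i"
proof -
  have nonneg: "0 \<le> g \<tau> i" if "s \<le> \<tau>" "i < n" for \<tau> i
    using that
  proof (induction \<tau> arbitrary: i rule: dec_induct)
    case (step m)
    have "0 \<le> (\<Sum>j<n. P m i j * g m j)"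
      using step P_nonneg by (intro sum_nonneg mult_nonneg_nonneg) auto
    also have "\<dots> \<le> g (Suc m) i" using super step by auto
    finally show ?case .
  qed (use g_nonneg in simp)
  have one_step: "\<eta> * g \<tau> l \<le> g (Suc \<tau>) i"
    if "s \<le> \<tau>" "i < n" "l < n" "l = i \<or> (l, i) \<in> E \<tau>" for \<tau> i l
  proof -
    have "\<eta> * g \<tau> l \<le> P \<tau> i l * g \<tau> l"
      using P_ge[OF that] nonneg[OF that(1,3)] by (intro mult_right_mono)
    also have "\<dots> \<le> (\<Sum>j<n. P \<tau> i j * g \<tau> j)"
      using that P_nonneg nonneg by (intro member_le_sum[of l "{..<n}" "\<lambda>j. P \<tau> i j * g \<tau> j"]) auto
    also have "\<dots> \<le> g (Suc \<tau>) i" using super that by auto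
    finally show ?thesis .
  qed
  define R where "R \<tau> = {i. i < n \<and> \<eta> ^ (\<tau> - s) * g s j \<le> g \<tau> i}" for \<tau>
  have R_Suc: "i \<in> R (Suc \<tau>)" if "s \<le> \<tau>" "l \<in> R \<tau>" "i < n" "l = i \<or> (l, i) \<in> E \<tau>" for \<tau> l i
  proof -
    have "\<eta> ^ (Suc \<tau> - s) * g s j = \<eta> * (\<eta> ^ (\<tau> - s) * g s j)"
      using that(1) by (simp add: Suc_diff_le)
    also have "\<dots> \<le> \<eta> * g \<tau> l" using that(2) \<eta> unfolding R_def by (intro mult_left_mono) auto
    also have "\<dots> \<le> g (Suc \<tau>) i" using one_step that unfolding R_def by auto
    finally show ?thesis using that(3) unfolding R_def by auto
  qed
  interpret jointly_spreading_sets n r s E R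
    using r_pos windows_connected R_Suc by unfold_locales (auto simp: R_def)
  have "j \<in> R s" using \<open>j < n\<close> unfolding R_def by simp
  then have "i \<in> R (s + r * n)" using R_full \<open>i < n\<close> by auto
  then show ?thesis unfolding R_def by simp
qed

lemma running_average_increment:
  fixes a :: "nat \<Rightarrow> real"
  assumes bounded: "\<And>\<tau>. 1 \<le> \<tau> \<Longrightarrow> \<bar>a \<tau>\<bar> \<le> K" and "1 \<le> t"
  shows "\<bar>(\<Sum>\<tau>=1..Suc t. a \<tau>) / real (Suc t) - (\<Sum>\<tau>=1..t. a \<tau>) / real t\<bar> \<le> 2 * K / real (Suc t)"
proof -
  define S where "S = (\<Sum>\<tau>=1..t. a \<tau>)"
  have "\<bar>S\<bar> \<le> (\<Sum>\<tau>=1..t. \<bar>a \<tau>\<bar>)" unfolding S_def by (rule sum_abs)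
  also have "\<dots> \<le> real t * K" using sum_mono[of "{1..t}" "\<lambda>\<tau>. \<bar>a \<tau>\<bar>" "\<lambda>_. K"] bounded by simp
  finally have S_bound: "\<bar>S\<bar> \<le> real t * K" .
  have "\<bar>real t * a (Suc t)\<bar> \<le> real t * K"
    using bounded[of "Suc t"] by (simp add: abs_mult mult_left_mono)
  then have "\<bar>real t * a (Suc t) - S\<bar> \<le> real t * (2 * K)" using S_bound by linarith
  have "(\<Sum>\<tau>=1..Suc t. a \<tau>) / real (Suc t) - S / real t
      = (real t * a (Suc t) - S) / (real t * real (Suc t))"
    using \<open>1 \<le> t\<close> by (simp add: S_def field_simps)
  then have "\<bar>(\<Sum>\<tau>=1..Suc t. a \<tau>) / real (Suc t) - S / real t\<bar>
      = \<bar>real t * a (Suc t) - S\<bar> / (real t * real (Suc t))"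
    by (simp add: abs_divide)
  also have "\<dots> \<le> real t * (2 * K) / (real t * real (Suc t))"
    using \<open>\<bar>real t * a (Suc t) - S\<bar> \<le> real t * (2 * K)\<close> by (rule divide_right_mono) simp
  also have "\<dots> = 2 * K / real (Suc t)" using \<open>1 \<le> t\<close> by simp
  finally show ?thesis unfolding S_def .
qed

lemma Max_minus_Min_le:
  fixes f :: "nat \<Rightarrow> real"
  assumes "0 < n" "\<And>i k. i < n \<Longrightarrow> k < n \<Longrightarrow> f i - f k \<le> b"
  shows "Max (f ` {..<n}) - Min (f ` {..<n}) \<le> b"
proof -
  have ne: "f ` {..<n} \<noteq> {}" using assms(1) by auto
  obtain i where "i < n" "Max (f ` {..<n}) = f i" using Max_in[OF _ ne] by auto
  moreover obtain k where "k < n" "Min (f ` {..<n}) = f k" using Min_in[OF _ ne] by auto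
  ultimately show ?thesis using assms(2) by simp
qed

lemma contraction_step_rate:
  fixes \<gamma> a C :: real and s L :: nat
  assumes "0 < \<gamma>" "\<gamma> \<le> 1" "0 \<le> a" "2 * a / \<gamma> \<le> C" "1 \<le> s"
    and "2 * real L \<le> \<gamma> * real (s + L)"
  shows "((1 - \<gamma>) * C + a) / real s \<le> C / real (s + L)"
proof -
  have "0 \<le> C" using assms(1,3,4) by (smt (verit) divide_nonneg_pos)
  have "a * real (s + L) = (2 * a / \<gamma>) * (\<gamma> * real (s + L) / 2)" using assms(1) by (simp add: field_simps)
  also have "\<dots> \<le> C * (\<gamma> * real (s + L) / 2)" using assms(1,4) by (intro mult_right_mono) auto
  also have "\<dots> \<le> C * (\<gamma> * real (s + L) - real L)" using assms(6) \<open>0 \<le> C\<close> by (intro mult_left_mono) auto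
  finally have "((1 - \<gamma>) * C + a) * real (s + L) \<le> C * real s" by (simp add: algebra_simps)
  then show ?thesis using assms(5) by (simp add: divide_simps)
qed

definition rate_horizon :: "real \<Rightarrow> nat \<Rightarrow> nat" where
  "rate_horizon \<gamma> L = nat \<lceil>2 * real L / \<gamma>\<rceil> + L + 1"

(* Below the horizon the linear bound b0 + b1 t is used, beyond it the recursion. *)
definition rate_const :: "real \<Rightarrow> nat \<Rightarrow> real \<Rightarrow> real \<Rightarrow> real \<Rightarrow> real" where
  "rate_const \<gamma> L a b0 b1 =
     max (2 * a / \<gamma>) ((b0 + b1 * real (rate_horizon \<gamma> L)) * real (rate_horizon \<gamma> L))"

lemma contracting_recursion_rate:
  fixes D :: "nat \<Rightarrow> real"
  assumes \<gamma>: "0 < \<gamma>" "\<gamma> \<le> 1" and "0 \<le> a" "0 \<le> b0" "0 \<le> b1" "1 \<le> L"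
    and recursion: "\<And>s. 1 \<le> s \<Longrightarrow> D (s + L) \<le> (1 - \<gamma>) * D s + a / real s"
    and linear: "\<And>t. 1 \<le> t \<Longrightarrow> D t \<le> b0 + b1 * real t"
    and "1 \<le> t"
  shows "D t \<le> rate_const \<gamma> L a b0 b1 / real t"
  using \<open>1 \<le> t\<close>
proof (induction t rule: less_induct)
  case (less t)
  define T where "T = rate_horizon \<gamma> L"
  define C where "C = rate_const \<gamma> L a b0 b1"
  have C: "2 * a / \<gamma> \<le> C" "(b0 + b1 * real T) * real T \<le> C"
    unfolding C_def rate_const_def T_def by auto
  have "0 \<le> (b0 + b1 * real T) * real T" using \<open>0 \<le> b0\<close> \<open>0 \<le> b1\<close> by simp
  then have "0 \<le> C" using C(2) by linarith
  have T: "L + 1 \<le> T" "2 * real L / \<gamma> \<le> real T"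
    unfolding T_def rate_horizon_def by linarith+
  show ?case
  proof (cases "t < T")
    case True
    have "D t \<le> b0 + b1 * real T"
      using linear[OF less.prems] True \<open>0 \<le> b1\<close> by (smt (verit) mult_left_mono of_nat_less_iff)
    also have "\<dots> = (b0 + b1 * real T) * real T / real T" using True by auto
    also have "\<dots> \<le> C / real t"
      using True less.prems C(2) \<open>0 \<le> C\<close> by (intro frac_le) auto
    finally show ?thesis unfolding C_def .
  next
    case False
    define s where "s = t - L"
    have s: "1 \<le> s" "s < t" "t = s + L" using False T \<open>1 \<le> L\<close> unfolding s_def by auto
    have "2 * real L \<le> \<gamma> * real T" using T(2) \<gamma> by (simp add: field_simps)
    also have "\<dots> \<le> \<gamma> * real (s + L)" using False s(3) \<gamma> by (intro mult_left_mono) auto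
    finally have window: "2 * real L \<le> \<gamma> * real (s + L)" .
    have "D t \<le> (1 - \<gamma>) * D s + a / real s" using recursion[OF s(1)] s(3) by simp
    also have "\<dots> \<le> (1 - \<gamma>) * (C / real s) + a / real s"
      using less.IH[OF s(2,1)] \<gamma> unfolding C_def by (intro add_right_mono mult_left_mono) auto
    also have "\<dots> = ((1 - \<gamma>) * C + a) / real s" by (simp add: add_divide_distrib)
    also have "\<dots> \<le> C / real t"
      using contraction_step_rate[OF \<gamma> \<open>0 \<le> a\<close> C(1) s(1)] window s(3) by simp
    finally show ?thesis unfolding C_def .
  qed
qed

lemma weighted_mean_between_Min_Max:
  fixes f w :: "nat \<Rightarrow> real"
  assumes "0 < n" "\<And>j. j < n \<Longrightarrow> 0 \<le> w j" "(\<Sum>j<n. w j) = real n"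
  shows "Min (f ` {..<n}) \<le> (\<Sum>j<n. w j * f j) / real n"
    and "(\<Sum>j<n. w j * f j) / real n \<le> Max (f ` {..<n})"
proof -
  have "real n * Min (f ` {..<n}) = (\<Sum>j<n. w j * Min (f ` {..<n}))"
    using assms(3) by (simp add: sum_distrib_right[symmetric])
  also have "\<dots> \<le> (\<Sum>j<n. w j * f j)"
    using assms(2) by (intro sum_mono mult_left_mono) auto
  finally show "Min (f ` {..<n}) \<le> (\<Sum>j<n. w j * f j) / real n"
    using assms(1) by (simp add: le_divide_eq mult.commute)
  have "(\<Sum>j<n. w j * f j) \<le> (\<Sum>j<n. w j * Max (f ` {..<n}))"
    using assms(2) by (intro sum_mono mult_left_mono) auto
  also have "\<dots> = real n * Max (f ` {..<n})"
    using assms(3) by (simp add: sum_distrib_right[symmetric])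
  finally show "(\<Sum>j<n. w j * f j) / real n \<le> Max (f ` {..<n})"
    using assms(1) by (simp add: divide_le_eq mult.commute)
qed

section \<open>Push-sum along a sample path\<close>

lemma push_nonneg:
  assumes "\<And>j. j < n \<Longrightarrow> 0 \<le> f j" "i < n"
  shows "0 \<le> push n E t f i"
  unfolding push_eq_matrix_sum[OF assms(2)] using assms(1)
  by (intro sum_nonneg mult_nonneg_nonneg push_matrix_nonneg) auto

lemma push_ge_entry:
  assumes "\<And>j. j < n \<Longrightarrow> 0 \<le> f j" "i < n" "l < n" "l = i \<or> (l, i) \<in> E t"
  shows "f l / real n \<le> push n E t f i"
proof -
  have "f l / real n = 1 / real n * f l" by simp
  also have "\<dots> \<le> push_matrix n E t i l * f l"
    using push_matrix_ge[of i n l E t] assms by (intro mult_right_mono) auto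
  also have "\<dots> \<le> (\<Sum>j<n. push_matrix n E t i j * f j)"
    using assms push_matrix_nonneg
    by (intro member_le_sum[of l "{..<n}" "\<lambda>j. push_matrix n E t i j * f j"] mult_nonneg_nonneg) auto
  finally show ?thesis using push_eq_matrix_sum[OF assms(2)] by simp
qed

definition v_lower :: "nat \<Rightarrow> nat \<Rightarrow> real" where
  "v_lower n r = (1 / real n) ^ (r * n)"

definition ratio_matrix_lower :: "nat \<Rightarrow> nat \<Rightarrow> real" where
  "ratio_matrix_lower n r = v_lower n r / (real n)\<^sup>2"

definition contraction :: "nat \<Rightarrow> nat \<Rightarrow> real" where
  "contraction n r = ratio_matrix_lower n r ^ (r * n)"

definition increment_const :: "nat \<Rightarrow> nat \<Rightarrow> real \<Rightarrow> real" where
  "increment_const n r K = 2 * K / v_lower n r"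

definition spread_const :: "nat \<Rightarrow> nat \<Rightarrow> real \<Rightarrow> real" where
  "spread_const n r K =
     rate_const (contraction n r) (r * n) (2 * real (r * n) * increment_const n r K)
       (2 * K) (2 * increment_const n r K)
     + 2 * increment_const n r K"

locale push_sum_path =
  fixes n :: nat and E :: "nat \<Rightarrow> (nat \<times> nat) set" and xs :: "nat \<Rightarrow> nat \<Rightarrow> real"
    and K :: real and r :: nat
  assumes n_pos: "0 < n" and r_pos: "0 < r"
    and windows_connected: "\<And>k. strongly_connected n (\<Union>t\<in>{r*k+1..r*(k+1)}. E t)"
    and samples_bounded: "\<And>i \<tau>. i < n \<Longrightarrow> 1 \<le> \<tau> \<Longrightarrow> \<bar>xs i \<tau>\<bar> \<le> K"
begin

abbreviation Y :: "nat \<Rightarrow> nat \<Rightarrow> real" where "Y t \<equiv> fst (yv n E xs t)"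
abbreviation V :: "nat \<Rightarrow> nat \<Rightarrow> real" where "V t \<equiv> snd (yv n E xs t)"

lemma Y_Suc: "1 \<le> t \<Longrightarrow> Y (Suc t) i = push n E t (Y t) i + zavg xs i (Suc t) - zavg xs i t"
  by (simp add: yv_Suc)

lemma V_Suc: "1 \<le> t \<Longrightarrow> V (Suc t) i = push n E t (V t) i"
  by (simp add: yv_Suc)

lemma mu_Suc: "mu n E xs (Suc t) i = push n E t (Y t) i"
  by (simp add: mu_def)

lemma K_nonneg: "0 \<le> K"
  using samples_bounded[of 0 1] n_pos by force

lemma V_nonneg: "1 \<le> t \<Longrightarrow> i < n \<Longrightarrow> 0 \<le> V t i"
proof (induction t arbitrary: i rule: dec_induct)
  case (step m)
  then show ?case by (simp add: V_Suc push_nonneg)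
qed simp

lemma V_sum: "1 \<le> t \<Longrightarrow> (\<Sum>i<n. V t i) = real n"
proof (induction t rule: dec_induct)
  case (step m)
  then show ?case by (simp add: V_Suc sum_push)
qed simp

lemma V_le: "1 \<le> t \<Longrightarrow> i < n \<Longrightarrow> V t i \<le> real n"
  using member_le_sum[of i "{..<n}" "V t"] V_nonneg V_sum by auto

lemma V_Suc_ge_power: "i < n \<Longrightarrow> (1 / real n) ^ k \<le> V (Suc k) i"
proof (induction k arbitrary: i)
  case (Suc k)
  have "(1 / real n) ^ Suc k \<le> V (Suc k) i / real n"
    using Suc n_pos by (simp add: divide_right_mono)
  also have "\<dots> \<le> push n E (Suc k) (V (Suc k)) i"
    by (rule push_ge_entry) (use Suc V_nonneg in auto)
  finally show ?case by (simp add: V_Suc)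
qed simp

lemma v_lower_pos: "0 < v_lower n r" and v_lower_le_1: "v_lower n r \<le> 1"
  unfolding v_lower_def using n_pos by (auto intro!: power_le_one)

(* Up to time r n, v loses at most a factor 1/n per step.  Later, some agent holds v >= 1 at
   time t - r n (the mean of v is 1), and its weight reaches every agent within r n steps. *)
lemma V_ge_v_lower:
  assumes "1 \<le> t" "i < n"
  shows "v_lower n r \<le> V t i"
proof (cases "t \<le> r * n")
  case True
  then obtain k where k: "t = Suc k" "k \<le> r * n" using assms by (cases t) auto
  have "v_lower n r \<le> (1 / real n) ^ k"
    unfolding v_lower_def using k n_pos by (intro power_decreasing) auto
  also have "\<dots> \<le> V t i" using V_Suc_ge_power[OF assms(2)] k by simp
  finally show ?thesis .
next
  case False
  define s where "s = t - r * n"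
  have s: "1 \<le> s" "t = s + r * n" using False unfolding s_def by auto
  obtain j where j: "j < n" "1 \<le> V s j"
  proof (rule ccontr)
    assume "\<not> thesis"
    then have "(\<Sum>j<n. V s j) < (\<Sum>j<n. 1)"
      using that n_pos by (intro sum_strict_mono) force+
    then show False using V_sum[OF s(1)] by simp
  qed
  have "(1 / real n) ^ (r * n) * V s j \<le> V (s + r * n) i"
  proof (rule propagation_lower_bound[OF r_pos windows_connected, where P = "push_matrix n E"])
    show "(\<Sum>j<n. push_matrix n E \<tau> i j * V \<tau> j) \<le> V (Suc \<tau>) i" if "s \<le> \<tau>" "i < n" for \<tau> i
      using that s(1) by (simp add: V_Suc push_eq_matrix_sum)
  qed (use n_pos s(1) j V_nonneg push_matrix_nonneg push_matrix_ge assms(2) in auto)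
  then show ?thesis
    unfolding v_lower_def using j s(2) by (smt (verit) mult_le_cancel_left1 zero_le_power divide_nonneg_nonneg of_nat_0_le_iff)
qed

lemma V_pos: "1 \<le> t \<Longrightarrow> i < n \<Longrightarrow> 0 < V t i"
  using V_ge_v_lower v_lower_pos by (meson less_le_trans)

lemma Y_sum: "1 \<le> t \<Longrightarrow> (\<Sum>i<n. Y t i) = (\<Sum>i<n. zavg xs i t)"
proof (induction t rule: dec_induct)
  case base
  then show ?case by (simp add: zavg_def)
next
  case (step m)
  then show ?case by (simp add: Y_Suc sum_push sum.distrib sum_subtractf)
qed

definition ratio :: "nat \<Rightarrow> nat \<Rightarrow> real" where
  "ratio t i = Y t i / V t i"

abbreviation mu_ratio :: "nat \<Rightarrow> nat \<Rightarrow> real" where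
  "mu_ratio t i \<equiv> mu n E xs t i / vw n E xs t i"

definition ratio_matrix :: "nat \<Rightarrow> nat \<Rightarrow> nat \<Rightarrow> real" where
  "ratio_matrix t i j = push_matrix n E t i j * V t j / V (Suc t) i"

definition ratio_increment :: "nat \<Rightarrow> nat \<Rightarrow> real" where
  "ratio_increment t i = (zavg xs i t - zavg xs i (t - 1)) / V t i"

definition ratio_spread :: "nat \<Rightarrow> real" where
  "ratio_spread t = Max (ratio t ` {..<n}) - Min (ratio t ` {..<n})"

lemma mu_ratio_Suc:
  assumes "1 \<le> t" "i < n"
  shows "mu_ratio (Suc t) i = (\<Sum>j<n. ratio_matrix t i j * ratio t j)"
proof -
  have "(\<Sum>j<n. ratio_matrix t i j * ratio t j) = (\<Sum>j<n. push_matrix n E t i j * Y t j / V (Suc t) i)"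
  proof (intro sum.cong refl)
    fix j
    assume "j \<in> {..<n}"
    then have "V t j \<noteq> 0" using V_pos[OF assms(1)] by force
    then show "ratio_matrix t i j * ratio t j = push_matrix n E t i j * Y t j / V (Suc t) i"
      unfolding ratio_matrix_def ratio_def by (simp add: field_simps)
  qed
  also have "\<dots> = push n E t (Y t) i / V (Suc t) i"
    by (simp add: push_eq_matrix_sum[OF assms(2)] sum_divide_distrib)
  finally show ?thesis unfolding vw_def mu_Suc by simp
qed

lemma ratio_matrix_row_sum:
  assumes "1 \<le> t" "i < n"
  shows "(\<Sum>j<n. ratio_matrix t i j) = 1"
proof -
  have "(\<Sum>j<n. ratio_matrix t i j) = push n E t (V t) i / V (Suc t) i"
    unfolding ratio_matrix_def by (simp add: push_eq_matrix_sum[OF assms(2)] sum_divide_distrib)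
  also have "\<dots> = 1" using V_Suc[OF assms(1)] V_pos[of "Suc t" i] assms by simp
  finally show ?thesis .
qed

lemma ratio_matrix_nonneg: "1 \<le> t \<Longrightarrow> i < n \<Longrightarrow> j < n \<Longrightarrow> 0 \<le> ratio_matrix t i j"
  unfolding ratio_matrix_def using V_nonneg[of t j] V_nonneg[of "Suc t" i] push_matrix_nonneg by simp

lemma ratio_matrix_lower_pos: "0 < ratio_matrix_lower n r"
  unfolding ratio_matrix_lower_def using v_lower_pos n_pos by simp

lemma ratio_matrix_lower_le_1: "ratio_matrix_lower n r \<le> 1"
proof -
  have "1 \<le> (real n)\<^sup>2" using n_pos by simp
  then show ?thesis
    unfolding ratio_matrix_lower_def using v_lower_le_1 v_lower_pos by (simp add: divide_le_eq)
qed

lemma ratio_matrix_ge: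
  assumes "1 \<le> t" "i < n" "l < n" "l = i \<or> (l, i) \<in> E t"
  shows "ratio_matrix_lower n r \<le> ratio_matrix t i l"
proof -
  have "1 / real n * v_lower n r \<le> push_matrix n E t i l * V t l"
    using push_matrix_ge[of i n l E t] V_ge_v_lower[of t l] v_lower_pos push_matrix_nonneg assms
    by (intro mult_mono) auto
  moreover have "0 < V (Suc t) i" "V (Suc t) i \<le> real n" using V_pos V_le assms by auto
  ultimately have "1 / real n * v_lower n r / real n \<le> push_matrix n E t i l * V t l / V (Suc t) i"
    using v_lower_pos n_pos by (intro frac_le) (auto intro: order_trans[rotated])
  then show ?thesis unfolding ratio_matrix_lower_def ratio_matrix_def by (simp add: power2_eq_square)
qed

lemma ratio_matrix_affine:
  assumes "1 \<le> t" "i < n"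
  shows "(\<Sum>j<n. ratio_matrix t i j * (a * ratio t j + c)) = a * mu_ratio (Suc t) i + c"
proof -
  have "(\<Sum>j<n. ratio_matrix t i j * (a * ratio t j + c))
      = a * (\<Sum>j<n. ratio_matrix t i j * ratio t j) + c * (\<Sum>j<n. ratio_matrix t i j)"
    by (simp add: algebra_simps sum.distrib sum_distrib_left)
  then show ?thesis using mu_ratio_Suc[OF assms] ratio_matrix_row_sum[OF assms] by simp
qed

lemma ratio_Suc: "1 \<le> t \<Longrightarrow> ratio (Suc t) i = mu_ratio (Suc t) i + ratio_increment (Suc t) i"
  unfolding ratio_def ratio_increment_def vw_def
  by (simp add: Y_Suc mu_Suc add_divide_distrib diff_divide_distrib)

lemma increment_const_nonneg: "0 \<le> increment_const n r K"
  unfolding increment_const_def using v_lower_pos K_nonneg by simp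

lemma ratio_increment_bound:
  assumes "1 \<le> t" "i < n"
  shows "\<bar>ratio_increment (Suc t) i\<bar> \<le> increment_const n r K / real (Suc t)"
proof -
  have "\<bar>zavg xs i (Suc t) - zavg xs i t\<bar> \<le> 2 * K / real (Suc t)"
    unfolding zavg_def using samples_bounded assms by (intro running_average_increment) auto
  then have "\<bar>zavg xs i (Suc t) - zavg xs i t\<bar> / V (Suc t) i \<le> (2 * K / real (Suc t)) / v_lower n r"
    using V_ge_v_lower[of "Suc t" i] v_lower_pos assms by (intro frac_le) auto
  then show ?thesis
    unfolding ratio_increment_def increment_const_def using V_pos[of "Suc t" i] assms
    by (simp add: abs_divide mult.commute)
qed

lemma ratio_bound: "i < n \<Longrightarrow> \<bar>ratio (Suc k) i\<bar> \<le> K + increment_const n r K * real (Suc k)"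
proof (induction k arbitrary: i)
  case 0
  then show ?case using samples_bounded[of i 1] increment_const_nonneg by (simp add: ratio_def)
next
  case (Suc k)
  let ?b = "K + increment_const n r K * real (Suc k)"
  have "\<bar>mu_ratio (Suc (Suc k)) i\<bar> = \<bar>\<Sum>j<n. ratio_matrix (Suc k) i j * ratio (Suc k) j\<bar>"
    using mu_ratio_Suc[of "Suc k" i] Suc.prems by simp
  also have "\<dots> \<le> (\<Sum>j<n. \<bar>ratio_matrix (Suc k) i j * ratio (Suc k) j\<bar>)"
    by (rule sum_abs)
  also have "\<dots> \<le> (\<Sum>j<n. ratio_matrix (Suc k) i j * ?b)"
    using Suc.IH ratio_matrix_nonneg[of "Suc k" i] Suc.prems
    by (intro sum_mono) (auto simp: abs_mult intro!: mult_left_mono)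
  also have "\<dots> = ?b" using ratio_matrix_row_sum[of "Suc k" i] Suc.prems by (simp add: sum_distrib_right[symmetric])
  finally have "\<bar>mu_ratio (Suc (Suc k)) i\<bar> \<le> ?b" .
  moreover have "increment_const n r K / real (Suc (Suc k)) \<le> increment_const n r K"
    using increment_const_nonneg by (simp add: divide_le_eq mult_le_cancel_left1)
  moreover have "increment_const n r K * real (Suc (Suc k)) = ?b - K + increment_const n r K"
    by (simp add: algebra_simps)
  ultimately show ?case
    using ratio_Suc[of "Suc k" i] ratio_increment_bound[of "Suc k" i] Suc.prems
    unfolding abs_le_iff by linarith
qed

lemma ratio_spread_linear:
  assumes "1 \<le> t"
  shows "ratio_spread t \<le> 2 * K + 2 * increment_const n r K * real t"
  unfolding ratio_spread_def
proof (rule Max_minus_Min_le[OF n_pos])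
  fix i k
  assume "i < n" "k < n"
  then show "ratio t i - ratio t k \<le> 2 * K + 2 * increment_const n r K * real t"
    using ratio_bound[of i "t - 1"] ratio_bound[of k "t - 1"] assms
    unfolding abs_le_iff by simp
qed

lemma ratio_window_bound:
  assumes "1 \<le> s" "\<bar>a\<bar> = 1" "\<And>j. j < n \<Longrightarrow> 0 \<le> a * ratio s j + c" "i < n" "j < n"
  shows "contraction n r * (a * ratio s j + c)
           \<le> a * ratio (s + r * n) i + c + real (r * n) * (increment_const n r K / real s)"
proof -
  define \<beta> where "\<beta> = increment_const n r K / real s"
  (* The drift (\<tau> - s) \<beta> absorbs the increments, so g is superharmonic for the ratio matrix. *)
  define g where "g \<tau> i = a * ratio \<tau> i + c + real (\<tau> - s) * \<beta>" for \<tau> i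
  have super: "(\<Sum>j<n. ratio_matrix \<tau> i j * g \<tau> j) \<le> g (Suc \<tau>) i" if "s \<le> \<tau>" "i < n" for \<tau> i
  proof -
    have "1 \<le> \<tau>" using that assms(1) by simp
    have "\<bar>ratio_increment (Suc \<tau>) i\<bar> \<le> increment_const n r K / real (Suc \<tau>)"
      using ratio_increment_bound \<open>1 \<le> \<tau>\<close> that(2) by blast
    also have "\<dots> \<le> \<beta>"
      unfolding \<beta>_def using that assms(1) increment_const_nonneg by (intro divide_left_mono) auto
    finally have "\<bar>ratio_increment (Suc \<tau>) i\<bar> \<le> \<beta>" .
    moreover have "a = 1 \<or> a = - 1" using assms(2) by (auto simp: abs_if split: if_splits)
    ultimately have "- \<beta> \<le> a * ratio_increment (Suc \<tau>) i"
      by (auto simp: abs_le_iff)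
    moreover have "(\<Sum>j<n. ratio_matrix \<tau> i j * g \<tau> j) = a * mu_ratio (Suc \<tau>) i + (c + real (\<tau> - s) * \<beta>)"
      unfolding g_def using ratio_matrix_affine[OF \<open>1 \<le> \<tau>\<close> that(2), of a "c + real (\<tau> - s) * \<beta>"]
      by (simp add: algebra_simps)
    ultimately show ?thesis
      unfolding g_def using ratio_Suc[OF \<open>1 \<le> \<tau>\<close>, of i] that(1)
      by (simp add: Suc_diff_le algebra_simps)
  qed
  have "ratio_matrix_lower n r ^ (r * n) * g s j \<le> g (s + r * n) i"
  proof (rule propagation_lower_bound[OF r_pos windows_connected ratio_matrix_lower_pos
        ratio_matrix_lower_le_1, where P = ratio_matrix])
    show "(\<Sum>j<n. ratio_matrix \<tau> i j * g \<tau> j) \<le> g (Suc \<tau>) i" if "s \<le> \<tau>" "i < n" for \<tau> i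
      using super that .
    show "0 \<le> ratio_matrix \<tau> i j" if "s \<le> \<tau>" "i < n" "j < n" for \<tau> i j
      using ratio_matrix_nonneg that assms(1) by simp
    show "ratio_matrix_lower n r \<le> ratio_matrix \<tau> i l"
      if "s \<le> \<tau>" "i < n" "l < n" "l = i \<or> (l, i) \<in> E \<tau>" for \<tau> i l
      using ratio_matrix_ge that assms(1) by simp
  qed (use assms(3-5) in \<open>auto simp: g_def\<close>)
  then show ?thesis unfolding g_def \<beta>_def contraction_def by simp
qed

lemma ratio_spread_window:
  assumes "1 \<le> s"
  shows "ratio_spread (s + r * n)
           \<le> (1 - contraction n r) * ratio_spread s + 2 * real (r * n) * increment_const n r K / real s"
proof -
  define M where "M = Max (ratio s ` {..<n})"
  define m where "m = Min (ratio s ` {..<n})"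
  define \<gamma> where "\<gamma> = contraction n r"
  define b where "b = real (r * n) * (increment_const n r K / real s)"
  have ne: "ratio s ` {..<n} \<noteq> {}" using n_pos by auto
  obtain jM where jM: "jM < n" "ratio s jM = M" using Max_in[OF _ ne] unfolding M_def by auto
  obtain jm where jm: "jm < n" "ratio s jm = m" using Min_in[OF _ ne] unfolding m_def by auto
  have between: "m \<le> ratio s j" "ratio s j \<le> M" if "j < n" for j
    unfolding m_def M_def using that by auto
  have "0 \<le> \<gamma>" unfolding \<gamma>_def contraction_def using ratio_matrix_lower_pos by simp
  have "0 \<le> M - m" using between[OF jM(1)] jM by simp
  have "ratio (s + r * n) i - ratio (s + r * n) k \<le> (1 - \<gamma>) * (M - m) + 2 * b"
    if "i < n" "k < n" for i k
  proof -
    have "\<gamma> * (1 * ratio s jM + - m) \<le> 1 * ratio (s + r * n) k + - m + b"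
      unfolding \<gamma>_def b_def using between
      by (intro ratio_window_bound[OF assms]) (auto simp: that jM)
    moreover have "\<gamma> * (- 1 * ratio s jm + M) \<le> - 1 * ratio (s + r * n) i + M + b"
      unfolding \<gamma>_def b_def using between
      by (intro ratio_window_bound[OF assms]) (auto simp: that jm)
    ultimately show ?thesis
      using jM jm mult_nonneg_nonneg[OF \<open>0 \<le> \<gamma>\<close> \<open>0 \<le> M - m\<close>] by (simp add: algebra_simps)
  qed
  then have "ratio_spread (s + r * n) \<le> (1 - \<gamma>) * (M - m) + 2 * b"
    unfolding ratio_spread_def by (intro Max_minus_Min_le[OF n_pos])
  then show ?thesis unfolding ratio_spread_def M_def m_def \<gamma>_def b_def by simp
qed

lemma contraction_pos: "0 < contraction n r" and contraction_le_1: "contraction n r \<le> 1"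
  unfolding contraction_def using ratio_matrix_lower_pos ratio_matrix_lower_le_1
  by (auto intro: power_le_one)

lemma ratio_spread_rate:
  "1 \<le> t \<Longrightarrow> ratio_spread t
     \<le> rate_const (contraction n r) (r * n) (2 * real (r * n) * increment_const n r K)
         (2 * K) (2 * increment_const n r K) / real t"
  using contraction_pos contraction_le_1 increment_const_nonneg K_nonneg r_pos n_pos
    ratio_spread_window ratio_spread_linear
  by (intro contracting_recursion_rate) (auto simp: Suc_le_eq)

lemma mu_ratio_spread:
  assumes "2 \<le> t"
  shows "Max (mu_ratio t ` {..<n}) - Min (mu_ratio t ` {..<n}) \<le> spread_const n r K / real t"
proof (rule Max_minus_Min_le[OF n_pos])
  fix i k
  assume "i < n" "k < n"
  obtain t' where t': "t = Suc t'" "1 \<le> t'" using assms by (cases t) auto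
  have incr: "\<bar>ratio_increment t j\<bar> \<le> increment_const n r K / real t" if "j < n" for j
    using ratio_increment_bound[OF t'(2) that] t' by simp
  have "ratio t i - ratio t k \<le> ratio_spread t"
    unfolding ratio_spread_def using \<open>i < n\<close> \<open>k < n\<close>
    by (smt (verit) Max_ge Min_le finite_imageI finite_lessThan image_eqI lessThan_iff)
  also have "\<dots> \<le> rate_const (contraction n r) (r * n) (2 * real (r * n) * increment_const n r K)
         (2 * K) (2 * increment_const n r K) / real t"
    using ratio_spread_rate assms by simp
  finally show "mu_ratio t i - mu_ratio t k \<le> spread_const n r K / real t"
    using ratio_Suc[OF t'(2), of i] ratio_Suc[OF t'(2), of k] incr[OF \<open>i < n\<close>] incr[OF \<open>k < n\<close>] t'(1)
    unfolding spread_const_def add_divide_distrib abs_le_iff by simp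
qed

lemma mu_ratio_near_average:
  assumes "2 \<le> t" "i < n"
  shows "\<bar>mu_ratio t i - (\<Sum>j<n. zavg xs j (t - 1)) / real n\<bar>
           \<le> Max (mu_ratio t ` {..<n}) - Min (mu_ratio t ` {..<n})"
proof -
  obtain t' where t': "t = Suc t'" "1 \<le> t'" using assms by (cases t) auto
  have "(\<Sum>j<n. zavg xs j (t - 1)) = (\<Sum>j<n. mu n E xs t j)"
    using Y_sum[OF t'(2)] t' by (simp add: mu_Suc sum_push)
  also have "\<dots> = (\<Sum>j<n. V t j * mu_ratio t j)"
  proof (intro sum.cong refl)
    fix j
    assume "j \<in> {..<n}"
    then have "V t j \<noteq> 0" using V_pos[of t j] assms by force
    then show "mu n E xs t j = V t j * mu_ratio t j" by (simp add: vw_def)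
  qed
  finally have average: "(\<Sum>j<n. zavg xs j (t - 1)) = (\<Sum>j<n. V t j * mu_ratio t j)" .
  have "\<And>j. j < n \<Longrightarrow> 0 \<le> V t j" "(\<Sum>j<n. V t j) = real n"
    using V_nonneg V_sum assms by auto
  note mean = weighted_mean_between_Min_Max[OF n_pos this, of "mu_ratio t"]
  have "Min (mu_ratio t ` {..<n}) \<le> mu_ratio t i" "mu_ratio t i \<le> Max (mu_ratio t ` {..<n})"
    using assms(2) by auto
  with mean show ?thesis
    unfolding average abs_le_iff by linarith
qed

lemma mu_ratio_tendsto:
  assumes "\<And>j. j < n \<Longrightarrow> (\<lambda>t. zavg xs j t) \<longlonglongrightarrow> a j" "i < n"
  shows "(\<lambda>t. mu_ratio t i) \<longlonglongrightarrow> (\<Sum>j<n. a j) / real n"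
proof -
  define avg where "avg t = (\<Sum>j<n. zavg xs j (t - 1)) / real n" for t
  have "(\<lambda>t. avg (Suc t)) \<longlonglongrightarrow> (\<Sum>j<n. a j) / real n"
    unfolding avg_def using n_pos by (auto intro!: tendsto_divide tendsto_sum assms(1))
  then have avg: "avg \<longlonglongrightarrow> (\<Sum>j<n. a j) / real n" by (rule LIMSEQ_imp_Suc)
  have "(\<lambda>t. mu_ratio t i - avg t) \<longlonglongrightarrow> 0"
  proof (rule Lim_null_comparison)
    have "norm (mu_ratio t i - avg t) \<le> spread_const n r K / real t" if "2 \<le> t" for t
      using mu_ratio_near_average[OF that assms(2)] mu_ratio_spread[OF that]
      unfolding avg_def real_norm_def by linarith
    then show "eventually (\<lambda>t. norm (mu_ratio t i - avg t) \<le> spread_const n r K / real t) sequentially"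
      unfolding eventually_sequentially by blast
    show "(\<lambda>t. spread_const n r K / real t) \<longlonglongrightarrow> 0"
      by (intro tendsto_divide_0[OF tendsto_const] filterlim_at_top_imp_at_infinity
          filterlim_real_sequentially)
  qed
  from tendsto_add[OF this avg] show ?thesis by simp
qed

end

section \<open>Measurability\<close>

lemma push_measurable:
  assumes "\<And>j. j < n \<Longrightarrow> (\<lambda>\<omega>. f \<omega> j) \<in> borel_measurable M" "i < n"
  shows "(\<lambda>\<omega>. push n E t (f \<omega>) i) \<in> borel_measurable M"
proof -
  have "(\<lambda>\<omega>. \<Sum>j\<in>in_nbrs n E t i. f \<omega> j / (1 + real (outdeg n E t j))) \<in> borel_measurable M"
    using assms in_nbrs_subset[of n E t i] by (intro borel_measurable_sum borel_measurable_divide) auto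
  then show ?thesis unfolding push_def using assms by measurable
qed

lemma yv_measurable:
  fixes x :: "nat \<Rightarrow> nat \<Rightarrow> 'a \<Rightarrow> real"
  assumes x: "\<And>i \<tau>. i < n \<Longrightarrow> 1 \<le> \<tau> \<Longrightarrow> x i \<tau> \<in> borel_measurable M"
  shows "i < n \<Longrightarrow> (\<lambda>\<omega>. fst (yv n E (\<lambda>j \<tau>. x j \<tau> \<omega>) t) i) \<in> borel_measurable M \<and>
           (\<lambda>\<omega>. snd (yv n E (\<lambda>j \<tau>. x j \<tau> \<omega>) t) i) \<in> borel_measurable M"
proof (induction t arbitrary: i)
  case (Suc t)
  have zavg: "(\<lambda>\<omega>. zavg (\<lambda>j \<tau>. x j \<tau> \<omega>) i s) \<in> borel_measurable M" for s
    unfolding zavg_def using x Suc.prems by (intro borel_measurable_divide borel_measurable_sum) auto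
  show ?case
  proof (cases "t = 0")
    case True
    then show ?thesis using x Suc.prems by simp
  next
    case False
    then have "1 \<le> t" by simp
    have "(\<lambda>\<omega>. push n E t (fst (yv n E (\<lambda>j \<tau>. x j \<tau> \<omega>) t)) i) \<in> borel_measurable M"
      by (rule push_measurable) (use Suc.IH Suc.prems in auto)
    moreover have "(\<lambda>\<omega>. push n E t (snd (yv n E (\<lambda>j \<tau>. x j \<tau> \<omega>) t)) i) \<in> borel_measurable M"
      by (rule push_measurable) (use Suc.IH Suc.prems in auto)
    ultimately show ?thesis using zavg unfolding yv_Suc[OF \<open>1 \<le> t\<close>] by simp
  qed
qed simp

lemma mu_ratio_measurable:
  fixes x :: "nat \<Rightarrow> nat \<Rightarrow> 'a \<Rightarrow> real"
  assumes "\<And>i \<tau>. i < n \<Longrightarrow> 1 \<le> \<tau> \<Longrightarrow> x i \<tau> \<in> borel_measurable M" "i < n"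
  shows "(\<lambda>\<omega>. mu n E (\<lambda>j \<tau>. x j \<tau> \<omega>) t i / vw n E (\<lambda>j \<tau>. x j \<tau> \<omega>) t i) \<in> borel_measurable M"
proof -
  have yv: "(\<lambda>\<omega>. fst (yv n E (\<lambda>j \<tau>. x j \<tau> \<omega>) s) j) \<in> borel_measurable M \<and>
      (\<lambda>\<omega>. snd (yv n E (\<lambda>j \<tau>. x j \<tau> \<omega>) s) j) \<in> borel_measurable M" if "j < n" for j s
    by (rule yv_measurable) (use assms(1) that in auto)
  have "(\<lambda>\<omega>. mu n E (\<lambda>j \<tau>. x j \<tau> \<omega>) t i) \<in> borel_measurable M"
    unfolding mu_def using yv assms(2) by (intro push_measurable) auto
  moreover have "(\<lambda>\<omega>. vw n E (\<lambda>j \<tau>. x j \<tau> \<omega>) t i) \<in> borel_measurable M"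
    unfolding vw_def using yv assms(2) by auto
  ultimately show ?thesis by (rule borel_measurable_divide)
qed

lemma mu_ratio_spread_measurable:
  fixes x :: "nat \<Rightarrow> nat \<Rightarrow> 'a \<Rightarrow> real"
  assumes "\<And>i \<tau>. i < n \<Longrightarrow> 1 \<le> \<tau> \<Longrightarrow> x i \<tau> \<in> borel_measurable M"
  shows "(\<lambda>\<omega>. Max ((\<lambda>i. mu n E (\<lambda>j \<tau>. x j \<tau> \<omega>) t i / vw n E (\<lambda>j \<tau>. x j \<tau> \<omega>) t i) ` {..<n})
             - Min ((\<lambda>i. mu n E (\<lambda>j \<tau>. x j \<tau> \<omega>) t i / vw n E (\<lambda>j \<tau>. x j \<tau> \<omega>) t i) ` {..<n}))
           \<in> borel_measurable M"
  using mu_ratio_measurable[OF assms]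
  by (intro borel_measurable_diff borel_measurable_Max borel_measurable_Min) auto

lemma (in prob_space) prob_tendsto_1_if_eventually_AE:
  assumes "\<And>t. {\<omega> \<in> space M. P t \<omega>} \<in> events"
    and "eventually (\<lambda>t. AE \<omega> in M. P t \<omega>) sequentially"
  shows "((\<lambda>t. prob {\<omega> \<in> space M. P t \<omega>}) \<longlongrightarrow> 1) sequentially"
proof (rule tendsto_eventually)
  show "eventually (\<lambda>t. prob {\<omega> \<in> space M. P t \<omega>} = 1) sequentially"
    using assms(2)
  proof eventually_elim
    case (elim t)
    with AE_space have "AE \<omega> in M. \<omega> \<in> {\<omega> \<in> space M. P t \<omega>}"
      by eventually_elim simp
    then show ?case by (subst prob_eq_1[OF assms(1)])
  qed
qed

lemma (in prob_space) push_sum_spread_rate_in_probability: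
  fixes x :: "nat \<Rightarrow> nat \<Rightarrow> 'a \<Rightarrow> real" and n :: nat and E :: "nat \<Rightarrow> (nat \<times> nat) set"
  defines "D \<equiv> \<lambda>t \<omega>.
    Max ((\<lambda>i. mu n E (\<lambda>j \<tau>. x j \<tau> \<omega>) t i / vw n E (\<lambda>j \<tau>. x j \<tau> \<omega>) t i) ` {..<n})
    - Min ((\<lambda>i. mu n E (\<lambda>j \<tau>. x j \<tau> \<omega>) t i / vw n E (\<lambda>j \<tau>. x j \<tau> \<omega>) t i) ` {..<n})"
  assumes "\<And>i \<tau>. i < n \<Longrightarrow> 1 \<le> \<tau> \<Longrightarrow> x i \<tau> \<in> borel_measurable M"
    and paths: "AE \<omega> in M. push_sum_path n E (\<lambda>j \<tau>. x j \<tau> \<omega>) K r"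
  shows "((\<lambda>t. prob {\<omega> \<in> space M. D t \<omega> \<le> spread_const n r K / real t}) \<longlongrightarrow> 1) sequentially"
proof (rule prob_tendsto_1_if_eventually_AE)
  show "{\<omega> \<in> space M. D t \<omega> \<le> spread_const n r K / real t} \<in> events" for t
    using mu_ratio_spread_measurable[OF assms(2), where E = E and t = t] unfolding D_def by measurable
  have "AE \<omega> in M. D t \<omega> \<le> spread_const n r K / real t" if "2 \<le> t" for t
    using paths unfolding D_def by eventually_elim (rule push_sum_path.mu_ratio_spread[OF _ that])
  then show "eventually (\<lambda>t. AE \<omega> in M. D t \<omega> \<le> spread_const n r K / real t) sequentially"
    unfolding eventually_sequentially by blast
qed

theorem theorem2:
  fixes M :: "'a measure" and n :: nat and E :: "nat \<Rightarrow> (nat \<times> nat) set"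
    and x :: "nat \<Rightarrow> nat \<Rightarrow> 'a \<Rightarrow> real" and K :: real
  assumes "prob_space M"
    and "n > 1"
    and "\<And>t. E t \<subseteq> {..<n} \<times> {..<n}"
    and "\<And>i. i < n \<Longrightarrow> prob_space.indep_vars M (\<lambda>_. borel) (x i) {1..}"
    and "\<And>i \<tau>. i < n \<Longrightarrow> \<tau> \<ge> 1 \<Longrightarrow> distr M borel (x i \<tau>) = distr M borel (x i 1)"
    and "\<And>i \<tau>. i < n \<Longrightarrow> \<tau> \<ge> 1 \<Longrightarrow> AE \<omega> in M. \<bar>x i \<tau> \<omega>\<bar> \<le> K"
    and "\<And>t. t \<ge> 1 \<Longrightarrow> compatible_weights n (E t)"
    and "repeatedly_jointly_strongly_connected n E"
  shows "(AE \<omega> in M. \<forall>i<n.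
           ((\<lambda>t. mu n E (\<lambda>j \<tau>. x j \<tau> \<omega>) t i / vw n E (\<lambda>j \<tau>. x j \<tau> \<omega>) t i)
             \<longlongrightarrow> (\<Sum>j<n. prob_space.expectation M (x j 1)) / real n) sequentially)
    \<and> (\<exists>C::real. ((\<lambda>t. measure M {\<omega> \<in> space M.
            Max ((\<lambda>i. mu n E (\<lambda>j \<tau>. x j \<tau> \<omega>) t i / vw n E (\<lambda>j \<tau>. x j \<tau> \<omega>) t i) ` {..<n})
          - Min ((\<lambda>i. mu n E (\<lambda>j \<tau>. x j \<tau> \<omega>) t i / vw n E (\<lambda>j \<tau>. x j \<tau> \<omega>) t i) ` {..<n})
            \<le> C / real t}) \<longlongrightarrow> 1) sequentially)"
proof -
  interpret prob_space M by fact
  obtain r where r: "0 < r" "\<And>k. strongly_connected n (\<Union>t\<in>{r*k+1..r*(k+1)}. E t)"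
    using assms(8) unfolding repeatedly_jointly_strongly_connected_def by blast
  have "AE \<omega> in M. \<forall>i \<tau>. i < n \<longrightarrow> 1 \<le> \<tau> \<longrightarrow> \<bar>x i \<tau> \<omega>\<bar> \<le> K"
    using assms(6) by (auto simp: AE_all_countable intro!: AE_impI)
  then have paths: "AE \<omega> in M. push_sum_path n E (\<lambda>j \<tau>. x j \<tau> \<omega>) K r"
    by eventually_elim (use assms(2) r in \<open>auto simp: push_sum_path_def\<close>)
  have "AE \<omega> in M. (\<lambda>t. zavg (\<lambda>j \<tau>. x j \<tau> \<omega>) j t) \<longlonglongrightarrow> expectation (x j 1)" if "j < n" for j
    unfolding zavg_def
    by (rule strong_law_bounded_iid[OF assms(4)[OF that] assms(5)[OF that] assms(6)[OF that order.refl]])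
  then have averages:
    "AE \<omega> in M. \<forall>j. j < n \<longrightarrow> (\<lambda>t. zavg (\<lambda>j \<tau>. x j \<tau> \<omega>) j t) \<longlonglongrightarrow> expectation (x j 1)"
    by (auto simp: AE_all_countable intro!: AE_impI)
  have consensus: "AE \<omega> in M. \<forall>i<n.
      ((\<lambda>t. mu n E (\<lambda>j \<tau>. x j \<tau> \<omega>) t i / vw n E (\<lambda>j \<tau>. x j \<tau> \<omega>) t i)
        \<longlongrightarrow> (\<Sum>j<n. expectation (x j 1)) / real n) sequentially"
    using paths averages by eventually_elim (blast intro: push_sum_path.mu_ratio_tendsto)
  have "x i \<tau> \<in> borel_measurable M" if "i < n" "1 \<le> \<tau>" for i \<tau>
    using assms(4)[OF that(1)] that(2) by (auto simp: indep_vars_def)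
  from push_sum_spread_rate_in_probability[OF this paths] consensus show ?thesis by blast
qed

end
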